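(* For every $n\ge1$, let $\alpha_n$ be the minimal real zero of $\phi_n(x)$. Then $\mathrm{QEC}(K_1+P_n)=-2\alpha_n-2$.
   Context: For a finite connected graph $G=(V,E)$ with $|V|\ge2$, let $d(i,j)$ be the graph distance and $D=[d(i,j)]_{i,j\in V}$ the distance matrix. The quadratic embedding constant is $\mathrm{QEC}(G)=\max\{\langle f,Df\rangle : f\in\mathbb{R}^V,\ \langle f,f\rangle=1,\ \langle\mathbf 1,f\rangle=0\}$, where $\mathbf 1$ is the all-ones vector. The fan graph $K_1+P_n$ has vertex set $\{0,1,\dots,n\}$ and edges $\{i,i+1\}$ ($1\le i\le n-1$) and $\{0,i\}$ ($1\le i\le n$). $U_n(x)$ is the Chebyshev polynomial of the second kind ($U_n(\cos\theta)=\sin((n+1)\theta)/\sin\theta$, $U_{-1}=0$), and $\phi_n(x)=((n+1)x^2-3x-n)U_n(x)+(x+1)(U_{n-1}(x)+1)$, a polynomial of degree $n+2$ all of whose zeros are real. *)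

theory Defs
  imports "HOL-Analysis.Analysis"
begin

definition graph_dist :: "('a \<Rightarrow> 'a \<Rightarrow> bool) \<Rightarrow> 'a \<Rightarrow> 'a \<Rightarrow> nat" where
  "graph_dist E u v = (LEAST k. (E ^^ k) u v)"

definition QEC :: "'a set \<Rightarrow> ('a \<Rightarrow> 'a \<Rightarrow> bool) \<Rightarrow> real" where
  "QEC V E = Sup {(\<Sum>i\<in>V. \<Sum>j\<in>V. f i * real (graph_dist E i j) * f j) | f :: 'a \<Rightarrow> real.
                   (\<Sum>i\<in>V. f i ^ 2) = 1 \<and> (\<Sum>i\<in>V. f i) = 0}"

(* Fan graph K_1 + P_n: vertices {0..n}, edges {i,i+1} (1 \<le> i \<le> n-1) and {0,i} (1 \<le> i \<le> n) *)
definition fan_vertices :: "nat \<Rightarrow> nat set" where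
  "fan_vertices n = {0..n}"

definition fan_edge :: "nat \<Rightarrow> nat \<Rightarrow> nat \<Rightarrow> bool" where
  "fan_edge n i j \<longleftrightarrow> i \<le> n \<and> j \<le> n \<and>
     ((i = 0 \<and> 1 \<le> j) \<or> (j = 0 \<and> 1 \<le> i) \<or>
      (1 \<le> i \<and> 1 \<le> j \<and> (j = i + 1 \<or> i = j + 1)))"

fun chebU :: "nat \<Rightarrow> real \<Rightarrow> real" where
  "chebU 0 x = 1"
| "chebU (Suc 0) x = 2 * x"
| "chebU (Suc (Suc n)) x = 2 * x * chebU (Suc n) x - chebU n x"

definition phi :: "nat \<Rightarrow> real \<Rightarrow> real" where
  "phi n x = ((real n + 1) * x ^ 2 - 3 * x - real n) * chebU n x
             + (x + 1) * (chebU (n - 1) x + 1)"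

end

theory Submission
  imports Defs "HOL-Computational_Algebra.Polynomial"
begin

text \<open>The hub is adjacent to every vertex, so the fan graph has diameter 2 and \<open>D = 2J - 2I - A\<close>;
  on zero-sum unit vectors this gives \<open>\<langle>f, D f\<rangle> = -2 - 2 q(f)\<close> with
  \<open>q(f) = \<Sum>\<^sub>k f\<^sub>k f\<^sub>k\<^sub>+\<^sub>1 - f\<^sub>0\<^sup>2\<close>, so \<open>QEC = -2 - 2 min q\<close>.
  At a minimiser, with multiplier \<open>\<mu>\<close>, the Lagrange conditions say that the path part \<open>g\<close>
  satisfies \<open>g\<^sub>k\<^sub>-\<^sub>1 + g\<^sub>k\<^sub>+\<^sub>1 - 2\<mu> g\<^sub>k = 2(1 + \<mu>) \<Sum>g\<close> with \<open>g\<^sub>0 = g\<^sub>n\<^sub>+\<^sub>1 = 0\<close>.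
  Solving this recurrence by Chebyshev polynomials leaves a \<open>2 \<times> 2\<close> linear system whose determinant
  is \<open>-2 \<phi>\<^sub>n(\<mu>)\<close>, by the Cassini identity \<open>U\<^sub>n\<^sup>2 + U\<^sub>n\<^sub>-\<^sub>1\<^sup>2 - 2x U\<^sub>n U\<^sub>n\<^sub>-\<^sub>1 = 1\<close>.
  Conversely every root \<open>x \<noteq> 1\<close> of \<open>\<phi>\<^sub>n\<close> is a value of \<open>q\<close> on the sphere. The reduction divides by
  \<open>1 - x\<close>, and indeed \<open>\<phi>\<^sub>n(1) = 0\<close> always; this root is harmless because \<open>min q \<le> -1/2\<close>.\<close>

section \<open>Chebyshev polynomials and the three-term recurrence\<close>

lemma chebU_Cassini:
  "chebU (Suc k) x ^ 2 + chebU k x ^ 2 - 2 * x * chebU (Suc k) x * chebU k x = 1"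
  by (induction k) (simp_all add: power2_eq_square algebra_simps)

fun chebU_poly :: "nat \<Rightarrow> real poly" where
  "chebU_poly 0 = 1"
| "chebU_poly (Suc 0) = [:0, 2:]"
| "chebU_poly (Suc (Suc n)) = [:0, 2:] * chebU_poly (Suc n) - chebU_poly n"

lemma poly_chebU_poly: "poly (chebU_poly k) x = chebU k x"
  by (induction k rule: chebU_poly.induct) auto

lemma chebU_minus_one: "chebU k (-1) = (-1) ^ k * (real k + 1)"
  by (induction k rule: induct_nat_012) (auto simp: algebra_simps)

definition phi_poly :: "nat \<Rightarrow> real poly" where
  "phi_poly n = [:- real n, -3, real n + 1:] * chebU_poly n + [:1, 1:] * (chebU_poly (n - 1) + 1)"

lemma poly_phi_poly: "poly (phi_poly n) x = phi n x"
  by (simp add: phi_poly_def phi_def poly_chebU_poly algebra_simps power2_eq_square)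

lemma phi_minus_one: "phi n (-1) = 4 * (-1) ^ n * (real n + 1)"
  by (simp add: phi_def chebU_minus_one algebra_simps)

lemma finite_phi_roots: "finite {x. phi n x = 0}"
proof -
  have "phi_poly n \<noteq> 0"
    using phi_minus_one[of n] poly_phi_poly[of n "-1"] by auto
  then show ?thesis
    using poly_roots_finite[of "phi_poly n"] by (simp add: poly_phi_poly)
qed

text \<open>The solutions of \<open>y (j + 2) = 2 x y (j + 1) - y j\<close> with initial values \<open>(0, 1)\<close> and
  \<open>(-1, 0)\<close>: these are \<open>U\<^sub>j\<^sub>-\<^sub>1\<close> and \<open>U\<^sub>j\<^sub>-\<^sub>2\<close>, with \<open>U\<^sub>-\<^sub>1 = 0\<close>, \<open>U\<^sub>-\<^sub>2 = -1\<close>.\<close>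

fun chebU_shift1 :: "nat \<Rightarrow> real \<Rightarrow> real" where
  "chebU_shift1 0 x = 0"
| "chebU_shift1 (Suc j) x = chebU j x"

fun chebU_shift2 :: "nat \<Rightarrow> real \<Rightarrow> real" where
  "chebU_shift2 0 x = -1"
| "chebU_shift2 (Suc 0) x = 0"
| "chebU_shift2 (Suc (Suc j)) x = chebU j x"

lemma chebU_shift1_rec: "chebU_shift1 (j + 2) x = 2 * x * chebU_shift1 (j + 1) x - chebU_shift1 j x"
  by (cases j) auto

lemma chebU_shift2_rec: "chebU_shift2 (j + 2) x = 2 * x * chebU_shift2 (j + 1) x - chebU_shift2 j x"
  by (induction j rule: induct_nat_012) auto

lemma three_term_recurrence_solution:
  fixes y :: "nat \<Rightarrow> real"
  assumes rec: "\<And>j. j < m \<Longrightarrow> y (j + 2) = 2 * x * y (j + 1) - y j"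
  shows "j \<le> m + 1 \<Longrightarrow> y j = y 1 * chebU_shift1 j x - y 0 * chebU_shift2 j x"
proof (induction j rule: induct_nat_012)
  case (ge2 l)
  then have "y (Suc (Suc l)) = 2 * x * y (l + 1) - y l"
    using rec[of l] by simp
  also have "\<dots> = 2 * x * (y 1 * chebU_shift1 (l + 1) x - y 0 * chebU_shift2 (l + 1) x)
                   - (y 1 * chebU_shift1 l x - y 0 * chebU_shift2 l x)"
    using ge2 by simp
  also have "\<dots> = y 1 * (2 * x * chebU_shift1 (l + 1) x - chebU_shift1 l x)
                   - y 0 * (2 * x * chebU_shift2 (l + 1) x - chebU_shift2 l x)"
    by (simp add: algebra_simps del: chebU_shift1.simps chebU_shift2.simps)
  also have "\<dots> = y 1 * chebU_shift1 (l + 2) x - y 0 * chebU_shift2 (l + 2) x"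
    by (simp only: chebU_shift1_rec chebU_shift2_rec)
  finally show ?case by simp
qed auto

lemma sum_second_difference:
  fixes g :: "nat \<Rightarrow> real"
  assumes "g 0 = 0" "g (n + 1) = 0"
  shows "(\<Sum>k\<in>{1..n}. g (k - 1) + g (k + 1) - 2 * x * g k) = 2 * (1 - x) * (\<Sum>k\<in>{1..n}. g k) - g 1 - g n"
proof -
  have prev: "(\<Sum>k\<in>{1..n}. g (k - 1)) = (\<Sum>k\<in>{1..n}. g k) - g n"
    using assms(1) by (induction n) (auto simp: sum.atLeast_Suc_atMost_Suc_shift)
  have succ: "(\<Sum>k\<in>{1..n}. g (k + 1)) = (\<Sum>k\<in>{1..n}. g k) - g 1 + g (n + 1)"
    by (induction n) auto
  have "(\<Sum>k\<in>{1..n}. g (k - 1) + g (k + 1) - 2 * x * g k)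
      = (\<Sum>k\<in>{1..n}. g (k - 1)) + (\<Sum>k\<in>{1..n}. g (k + 1)) - 2 * x * (\<Sum>k\<in>{1..n}. g k)"
    by (simp add: sum.distrib sum_subtractf sum_distrib_left)
  also have "\<dots> = 2 * (1 - x) * (\<Sum>k\<in>{1..n}. g k) - g 1 - g n"
    using prev succ assms(2) by (simp add: algebra_simps)
  finally show ?thesis .
qed

lemma sum_neighbour_products:
  fixes g :: "nat \<Rightarrow> real"
  assumes "g 0 = 0" "g (n + 1) = 0"
  shows "(\<Sum>k\<in>{1..n}. g k * (g (k - 1) + g (k + 1))) = 2 * (\<Sum>k\<in>{1..<n}. g k * g (Suc k))"
proof -
  have prev: "(\<Sum>k\<in>{1..m}. g k * g (k - 1)) = (\<Sum>k\<in>{1..<m}. g k * g (Suc k))" for m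
    using assms(1) by (induction m) (auto simp: mult.commute elim: less_SucE)
  have succ: "(\<Sum>k\<in>{1..m}. g k * g (k + 1)) = (\<Sum>k\<in>{1..<m}. g k * g (Suc k)) + g m * g (m + 1)" for m
    using assms(1) by (induction m) auto
  show ?thesis
    using prev[of n] succ[of n] assms(2) by (simp add: distrib_left sum.distrib)
qed

lemma sum_atLeast0_atMost_split: "(\<Sum>i\<in>{0..n::nat}. X i) = X 0 + (\<Sum>i\<in>{1..n}. X i :: real)"
  by (simp add: sum.atLeast_Suc_atMost)

lemma nontrivial_solution_2x2_iff:
  fixes P Q R S :: real
  shows "(\<exists>a d. (a \<noteq> 0 \<or> d \<noteq> 0) \<and> a * P + d * Q = 0 \<and> a * R + d * S = 0) \<longleftrightarrow> P * S - Q * R = 0"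
proof
  assume "\<exists>a d. (a \<noteq> 0 \<or> d \<noteq> 0) \<and> a * P + d * Q = 0 \<and> a * R + d * S = 0"
  then obtain a d where ad: "a \<noteq> 0 \<or> d \<noteq> 0" "a * P + d * Q = 0" "a * R + d * S = 0" by blast
  have "(P * S - Q * R) * a = S * (a * P + d * Q) - Q * (a * R + d * S)"
    "(P * S - Q * R) * d = P * (a * R + d * S) - R * (a * P + d * Q)"
    by (simp_all add: algebra_simps)
  then show "P * S - Q * R = 0" using ad by auto
next
  assume det: "P * S - Q * R = 0"
  show "\<exists>a d. (a \<noteq> 0 \<or> d \<noteq> 0) \<and> a * P + d * Q = 0 \<and> a * R + d * S = 0"
  proof (cases "P = 0 \<and> Q = 0")
    case True
    show ?thesis
    proof (cases "R = 0 \<and> S = 0")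
      case False
      with True have "(S \<noteq> 0 \<or> - R \<noteq> 0) \<and> S * P + - R * Q = 0 \<and> S * R + - R * S = 0"
        by auto
      then show ?thesis by blast
    qed (use True in auto)
  next
    case False
    with det have "(Q \<noteq> 0 \<or> - P \<noteq> 0) \<and> Q * P + - P * Q = 0 \<and> Q * R + - P * S = 0"
      by (auto simp: algebra_simps)
    then show ?thesis by blast
  qed
qed

section \<open>The eigenvalue equations on the path\<close>

definition path_solution :: "real \<Rightarrow> real \<Rightarrow> real \<Rightarrow> nat \<Rightarrow> real" where
  "path_solution x a d j = d + (a - d) * chebU_shift1 j x + d * chebU_shift2 j x"

lemma path_solution_0 [simp]: "path_solution x a d 0 = 0"
  and path_solution_1 [simp]: "path_solution x a d (Suc 0) = a"
  by (simp_all add: path_solution_def)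

lemma path_solution_second_difference:
  assumes "1 \<le> k"
  shows "path_solution x a d (k - 1) + path_solution x a d (k + 1) - 2 * x * path_solution x a d k = 2 * (1 - x) * d"
proof -
  obtain j where k: "k = j + 1" using assms by (cases k) auto
  have "path_solution x a d (j + 2) = 2 * x * path_solution x a d (j + 1) - path_solution x a d j + 2 * (1 - x) * d"
    unfolding path_solution_def chebU_shift1_rec chebU_shift2_rec
    by (simp add: algebra_simps del: chebU_shift1.simps chebU_shift2.simps)
  then show ?thesis by (simp add: k)
qed

lemma path_solution_at_n:
  assumes "1 \<le> n"
  shows "path_solution x a d n = d + (a - d) * chebU (n - 1) x + d * (2 * x * chebU (n - 1) x - chebU n x)"
proof -
  obtain m where "n = Suc m" using assms by (cases n) auto
  then show ?thesis by (cases m) (auto simp: path_solution_def)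
qed

lemma path_solution_at_Suc_n:
  assumes "1 \<le> n"
  shows "path_solution x a d (n + 1) = a * chebU n x + d * (1 + chebU (n - 1) x - chebU n x)"
proof -
  obtain m where "n = Suc m" using assms by (cases n) auto
  then show ?thesis by (simp add: path_solution_def algebra_simps)
qed

lemma path_solution_sum:
  assumes "path_solution x a d (n + 1) = 0"
  shows "2 * (1 - x) * (\<Sum>i\<in>{1..n}. path_solution x a d i)
    = a + path_solution x a d n + 2 * n * (1 - x) * d"
proof -
  let ?g = "path_solution x a d"
  have "(\<Sum>k\<in>{1..n}. ?g (k - 1) + ?g (k + 1) - 2 * x * ?g k) = (\<Sum>k\<in>{1..n}. 2 * (1 - x) * d)"
    by (intro sum.cong refl path_solution_second_difference) simp
  then show ?thesis
    using sum_second_difference[of ?g n x] assms by (simp add: algebra_simps)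
qed

lemma eq_path_solution:
  fixes g :: "nat \<Rightarrow> real"
  assumes "x \<noteq> 1" "g 0 = 0"
    and eq: "\<And>k. k \<in> {1..n} \<Longrightarrow> g (k - 1) + g (k + 1) - 2 * x * g k = c"
    and "j \<le> n + 1"
  shows "g j = path_solution x (g 1) (c / (2 * (1 - x))) j"
proof -
  define d where "d = c / (2 * (1 - x))"
  have c: "c = 2 * (1 - x) * d" using \<open>x \<noteq> 1\<close> by (simp add: d_def)
  have "g (i + 2) - d = 2 * x * (g (i + 1) - d) - (g i - d)" if "i < n" for i
    using eq[of "i + 1"] that by (simp add: c algebra_simps)
  then have "g j - d = (g 1 - d) * chebU_shift1 j x - (g 0 - d) * chebU_shift2 j x"
    using three_term_recurrence_solution[of n "\<lambda>i. g i - d" x j] \<open>j \<le> n + 1\<close> by simp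
  then show ?thesis using \<open>g 0 = 0\<close> by (simp add: path_solution_def d_def algebra_simps)
qed

text \<open>With \<open>f 0 = - (\<Sum>i = 1..n. g i)\<close> and \<open>f i = g i\<close> on the path, these are the stationarity
  equations of \<open>fan_form n\<close> below on the unit sphere of zero-sum vectors, with multiplier \<open>x\<close>.\<close>

definition path_eigen :: "nat \<Rightarrow> real \<Rightarrow> (nat \<Rightarrow> real) \<Rightarrow> bool" where
  "path_eigen n x g \<longleftrightarrow> g 0 = 0 \<and> g (n + 1) = 0 \<and>
     (\<forall>k\<in>{1..n}. g (k - 1) + g (k + 1) - 2 * x * g k = 2 * (1 + x) * (\<Sum>i\<in>{1..n}. g i))"

lemma path_eigen_cong:
  assumes "\<And>j. j \<le> n + 1 \<Longrightarrow> g j = h j"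
  shows "path_eigen n x g \<longleftrightarrow> path_eigen n x h"
proof -
  have "(\<Sum>i\<in>{1..n}. g i) = (\<Sum>i\<in>{1..n}. h i)" using assms by (intro sum.cong) auto
  moreover have "g (k - 1) = h (k - 1) \<and> g (k + 1) = h (k + 1) \<and> g k = h k" if "k \<in> {1..n}" for k
    using assms that by auto
  ultimately show ?thesis unfolding path_eigen_def using assms by auto
qed

lemma path_eigen_path_solution_iff:
  fixes x :: real
  assumes "1 \<le> n" "x \<noteq> 1"
  defines "u \<equiv> chebU n x" and "w \<equiv> chebU (n - 1) x"
  shows "path_eigen n x (path_solution x a d) \<longleftrightarrow>
    a * u + d * (1 + w - u) = 0 \<and>
    a * ((1 + x) * (1 + w)) + d * ((1 + x) * (1 - w + 2 * x * w - u + 2 * n * (1 - x)) - 2 * (1 - x) ^ 2) = 0"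
    (is "_ \<longleftrightarrow> ?E1 \<and> ?E2")
proof -
  let ?g = "path_solution x a d"
  define S where "S = (\<Sum>i\<in>{1..n}. ?g i)"
  have boundary: "?g (n + 1) = 0 \<longleftrightarrow> ?E1"
    using path_solution_at_Suc_n[OF \<open>1 \<le> n\<close>] by (simp add: u_def w_def)
  have equations: "(\<forall>k\<in>{1..n}. ?g (k - 1) + ?g (k + 1) - 2 * x * ?g k = 2 * (1 + x) * S)
      \<longleftrightarrow> 2 * (1 - x) * d = 2 * (1 + x) * S"
    using path_solution_second_difference[of _ x a d] \<open>1 \<le> n\<close> by fastforce
  have "2 * (1 - x) * d = 2 * (1 + x) * S \<longleftrightarrow> ?E2" if "?g (n + 1) = 0"
  proof -
    have sum: "2 * (1 - x) * S = a + ?g n + 2 * n * (1 - x) * d"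
      using path_solution_sum[OF that] by (simp add: S_def)
    have "2 * (1 - x) * d = 2 * (1 + x) * S
        \<longleftrightarrow> (1 - x) * (2 * (1 - x) * d) = (1 - x) * (2 * (1 + x) * S)"
      using \<open>x \<noteq> 1\<close> by simp
    also have "\<dots> \<longleftrightarrow> (1 + x) * (2 * (1 - x) * S) = 2 * (1 - x) ^ 2 * d"
    proof -
      have "(1 - x) * (2 * (1 - x) * d) = 2 * (1 - x) ^ 2 * d"
        "(1 - x) * (2 * (1 + x) * S) = (1 + x) * (2 * (1 - x) * S)"
        by (simp_all add: power2_eq_square algebra_simps)
      then show ?thesis by metis
    qed
    also have "\<dots> \<longleftrightarrow> ?E2"
      unfolding sum path_solution_at_n[OF \<open>1 \<le> n\<close>] u_def w_def by (auto simp: algebra_simps power2_eq_square)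
    finally show ?thesis .
  qed
  then show ?thesis
    unfolding path_eigen_def S_def[symmetric] equations using boundary by auto
qed

lemma path_eigen_determinant:
  fixes x :: real
  assumes "1 \<le> n"
  defines "u \<equiv> chebU n x" and "w \<equiv> chebU (n - 1) x"
  shows "u * ((1 + x) * (1 - w + 2 * x * w - u + 2 * n * (1 - x)) - 2 * (1 - x) ^ 2)
           - (1 + w - u) * ((1 + x) * (1 + w)) = - 2 * phi n x"
proof -
  have "u ^ 2 + w ^ 2 - 2 * x * u * w = 1"
    using chebU_Cassini[of "n - 1" x] assms by (simp add: u_def w_def)
  then show ?thesis
    unfolding phi_def u_def[symmetric] w_def[symmetric]
    by (simp add: algebra_simps power2_eq_square) algebra
qed

lemma path_eigen_iff_phi:
  fixes x :: real
  assumes "1 \<le> n" "x \<noteq> 1"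
  shows "(\<exists>g. path_eigen n x g \<and> (\<exists>k\<in>{1..n}. g k \<noteq> 0)) \<longleftrightarrow> phi n x = 0"
proof -
  have "(\<exists>g. path_eigen n x g \<and> (\<exists>k\<in>{1..n}. g k \<noteq> 0))
      \<longleftrightarrow> (\<exists>a d. (a \<noteq> 0 \<or> d \<noteq> 0) \<and> path_eigen n x (path_solution x a d))"
  proof
    assume "\<exists>g. path_eigen n x g \<and> (\<exists>k\<in>{1..n}. g k \<noteq> 0)"
    then obtain g k where g: "path_eigen n x g" and k: "k \<in> {1..n}" "g k \<noteq> 0" by blast
    define c where "c = 2 * (1 + x) * (\<Sum>i\<in>{1..n}. g i)"
    define d where "d = c / (2 * (1 - x))"
    have sol: "g j = path_solution x (g 1) d j" if "j \<le> n + 1" for j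
      using eq_path_solution[OF \<open>x \<noteq> 1\<close>, of g n c j] g that by (simp add: path_eigen_def c_def d_def)
    have "path_eigen n x (path_solution x (g 1) d)"
      using path_eigen_cong[of n g "path_solution x (g 1) d" x] sol g by blast
    moreover have "g 1 \<noteq> 0 \<or> d \<noteq> 0"
    proof (rule ccontr)
      assume "\<not> (g 1 \<noteq> 0 \<or> d \<noteq> 0)"
      then have "path_solution x (g 1) d k = 0" by (simp add: path_solution_def)
      with sol[of k] k show False by simp
    qed
    ultimately show "\<exists>a d. (a \<noteq> 0 \<or> d \<noteq> 0) \<and> path_eigen n x (path_solution x a d)" by blast
  next
    assume "\<exists>a d. (a \<noteq> 0 \<or> d \<noteq> 0) \<and> path_eigen n x (path_solution x a d)"
    then obtain a d where ad: "a \<noteq> 0 \<or> d \<noteq> 0" and eig: "path_eigen n x (path_solution x a d)" by blast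
    have "\<exists>k\<in>{1..n}. path_solution x a d k \<noteq> 0"
    proof (rule ccontr)
      assume "\<not> ?thesis"
      then have zero: "path_solution x a d k = 0" if "k \<in> {1..n}" for k using that by blast
      have "a = 0" using zero[of 1] \<open>1 \<le> n\<close> by simp
      moreover have "path_solution x a d 2 = 0"
        using zero[of 2] eig \<open>1 \<le> n\<close> by (cases "n = 1") (auto simp: path_eigen_def numeral_2_eq_2)
      then have "2 * (1 - x) * d = 0"
        using path_solution_second_difference[of 1 x a d] \<open>a = 0\<close> by (simp add: numeral_2_eq_2)
      then have "d = 0" using \<open>x \<noteq> 1\<close> by simp
      ultimately show False using ad by simp
    qed
    then show "\<exists>g. path_eigen n x g \<and> (\<exists>k\<in>{1..n}. g k \<noteq> 0)" using eig by blast
  qed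
  also have "\<dots> \<longleftrightarrow> phi n x = 0"
    unfolding path_eigen_path_solution_iff[OF assms] nontrivial_solution_2x2_iff path_eigen_determinant[OF assms(1)]
    by simp
  finally show ?thesis .
qed

lemma path_eigen_rayleigh:
  fixes g :: "nat \<Rightarrow> real"
  assumes "path_eigen n x g"
  defines "S \<equiv> \<Sum>i\<in>{1..n}. g i"
  shows "(\<Sum>k\<in>{1..<n}. g k * g (Suc k)) - S ^ 2 = x * (S ^ 2 + (\<Sum>i\<in>{1..n}. g i ^ 2))"
proof -
  have "(\<Sum>k\<in>{1..n}. g k * (g (k - 1) + g (k + 1) - 2 * x * g k)) = (\<Sum>k\<in>{1..n}. g k * (2 * (1 + x) * S))"
    using assms by (intro sum.cong) (auto simp: path_eigen_def)
  moreover have "(\<Sum>k\<in>{1..n}. g k * (g (k - 1) + g (k + 1) - 2 * x * g k))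
      = (\<Sum>k\<in>{1..n}. g k * (g (k - 1) + g (k + 1))) - 2 * x * (\<Sum>i\<in>{1..n}. g i ^ 2)"
    by (simp add: algebra_simps sum_subtractf sum_distrib_left power2_eq_square)
  moreover have "(\<Sum>k\<in>{1..n}. g k * (2 * (1 + x) * S)) = 2 * (1 + x) * S ^ 2"
  proof -
    have "(\<Sum>k\<in>{1..n}. g k * (2 * (1 + x) * S)) = S * (2 * (1 + x) * S)"
      by (simp add: S_def sum_distrib_right)
    then show ?thesis by (simp add: power2_eq_square)
  qed
  ultimately show ?thesis
    using sum_neighbour_products[of g n] assms(1) by (simp add: path_eigen_def algebra_simps)
qed

section \<open>Minimising the quadratic form\<close>

definition fan_form :: "nat \<Rightarrow> (nat \<Rightarrow> real) \<Rightarrow> real" where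
  "fan_form n f = (\<Sum>k\<in>{1..<n}. f k * f (Suc k)) - f 0 ^ 2"

definition fan_form_polar :: "nat \<Rightarrow> (nat \<Rightarrow> real) \<Rightarrow> (nat \<Rightarrow> real) \<Rightarrow> real" where
  "fan_form_polar n f h = (\<Sum>k\<in>{1..<n}. f k * h (Suc k) + h k * f (Suc k)) - 2 * f 0 * h 0"

lemma fan_form_add_scaled:
  "fan_form n (\<lambda>i. f i + t * h i) = fan_form n f + t * fan_form_polar n f h + t ^ 2 * fan_form n h"
proof -
  have "(\<Sum>k\<in>{1..<n}. (f k + t * h k) * (f (Suc k) + t * h (Suc k))) =
     (\<Sum>k\<in>{1..<n}. f k * f (Suc k) + t * (f k * h (Suc k) + h k * f (Suc k)) + t ^ 2 * (h k * h (Suc k)))"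
    by (intro sum.cong) (auto simp: algebra_simps power2_eq_square)
  then show ?thesis
    unfolding fan_form_def fan_form_polar_def
    by (simp add: sum.distrib sum_distrib_left algebra_simps power2_eq_square)
qed

lemma fan_form_scale: "fan_form n (\<lambda>i. c * f i) = c ^ 2 * fan_form n f"
  unfolding fan_form_def by (simp add: sum_distrib_left power2_eq_square algebra_simps)

lemma sum_power2_add_scaled:
  fixes f h :: "'a \<Rightarrow> real"
  shows "(\<Sum>i\<in>A. (f i + t * h i) ^ 2) = (\<Sum>i\<in>A. f i ^ 2) + 2 * t * (\<Sum>i\<in>A. f i * h i) + t ^ 2 * (\<Sum>i\<in>A. h i ^ 2)"
proof -
  have "(\<Sum>i\<in>A. (f i + t * h i) ^ 2) = (\<Sum>i\<in>A. f i ^ 2 + 2 * t * (f i * h i) + t ^ 2 * h i ^ 2)"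
    by (intro sum.cong) (auto simp: algebra_simps power2_eq_square)
  then show ?thesis by (simp add: sum.distrib sum_distrib_left)
qed

lemma linear_coefficient_zero_if_nonneg:
  fixes B C :: real
  assumes "\<And>t. 0 \<le> t * B + t ^ 2 * C"
  shows "B = 0"
proof (rule ccontr)
  assume "B \<noteq> 0"
  define e where "e = \<bar>C\<bar> + 1"
  have "e > 0" by (simp add: e_def)
  have "- B / e * B + (- B / e) ^ 2 * C = (B ^ 2 / e ^ 2) * (C - e)"
    using \<open>e > 0\<close> by (simp add: field_simps power2_eq_square)
  also have "\<dots> < 0"
    using \<open>B \<noteq> 0\<close> \<open>e > 0\<close> by (intro mult_pos_neg) (simp_all add: e_def)
  finally show False using assms[of "- B / e"] by simp
qed

text \<open>Vectors on the vertex set \<open>{0..n}\<close> are extended by zero, so that the constraint set is compact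
  in the product topology of \<open>nat \<Rightarrow> real\<close>.\<close>

definition zero_sum_sphere :: "nat \<Rightarrow> (nat \<Rightarrow> real) set" where
  "zero_sum_sphere n = {f. (\<forall>k>n. f k = 0) \<and> (\<Sum>i\<in>{0..n}. f i ^ 2) = 1 \<and> (\<Sum>i\<in>{0..n}. f i) = 0}"

lemma compact_zero_sum_sphere: "compact (zero_sum_sphere n)"
proof -
  define B where "B k = (if k \<le> n then {-1..1} else {0::real})" for k
  have "compactin (product_topology (\<lambda>_. euclidean) UNIV) (PiE UNIV B)"
    unfolding compactin_PiE by (auto simp: B_def)
  then have "compact (Pi UNIV B)"
    by (simp add: euclidean_product_topology PiE_UNIV_domain)
  moreover have "closed {f::nat \<Rightarrow> real. (\<Sum>i\<in>{0..n}. f i ^ 2) = 1}"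
    "closed {f::nat \<Rightarrow> real. (\<Sum>i\<in>{0..n}. f i) = 0}"
    by (intro closed_Collect_eq continuous_intros continuous_on_product_coordinates)+
  moreover have "zero_sum_sphere n
      = Pi UNIV B \<inter> {f. (\<Sum>i\<in>{0..n}. f i ^ 2) = 1} \<inter> {f. (\<Sum>i\<in>{0..n}. f i) = 0}"
  proof (intro equalityI subsetI)
    fix f assume f: "f \<in> zero_sum_sphere n"
    have "f k \<in> B k" for k
    proof (cases "k \<le> n")
      case True
      have "f k ^ 2 \<le> (\<Sum>i\<in>{0..n}. f i ^ 2)" using True by (intro member_le_sum) auto
      then have "\<bar>f k\<bar> \<le> 1" using f by (simp add: zero_sum_sphere_def abs_square_le_1)
      then show ?thesis using True by (simp add: B_def abs_le_iff)
    qed (use f in \<open>simp add: B_def zero_sum_sphere_def\<close>)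
    then show "f \<in> Pi UNIV B \<inter> {f. (\<Sum>i\<in>{0..n}. f i ^ 2) = 1} \<inter> {f. (\<Sum>i\<in>{0..n}. f i) = 0}"
      using f by (simp add: zero_sum_sphere_def)
  next
    fix f assume f: "f \<in> Pi UNIV B \<inter> {f. (\<Sum>i\<in>{0..n}. f i ^ 2) = 1} \<inter> {f. (\<Sum>i\<in>{0..n}. f i) = 0}"
    have "f k = 0" if "k > n" for k
    proof -
      from f have "f k \<in> B k" by blast
      with that show ?thesis by (simp add: B_def)
    qed
    with f show "f \<in> zero_sum_sphere n" by (simp add: zero_sum_sphere_def)
  qed
  ultimately show ?thesis by (simp add: compact_Int_closed)
qed

lemma continuous_on_fan_form: "continuous_on S (fan_form n)"
  unfolding fan_form_def[abs_def]
  by (intro continuous_intros continuous_on_subset[OF continuous_on_product_coordinates]) simp_all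

lemma fan_form_minimum_homogeneous:
  assumes min: "\<And>f. f \<in> zero_sum_sphere n \<Longrightarrow> fan_form n fm \<le> fan_form n f"
    and supp: "\<And>k. k > n \<Longrightarrow> f k = 0" and zero_sum: "(\<Sum>i\<in>{0..n}. f i) = 0"
  shows "fan_form n fm * (\<Sum>i\<in>{0..n}. f i ^ 2) \<le> fan_form n f"
proof (cases "(\<Sum>i\<in>{0..n}. f i ^ 2) = 0")
  case True
  then have "f i = 0" if "i \<le> n" for i
    using that by (subst (asm) sum_nonneg_eq_0_iff) auto
  then have "fan_form n f = 0" by (simp add: fan_form_def)
  then show ?thesis using True by simp
next
  case False
  define q where "q = (\<Sum>i\<in>{0..n}. f i ^ 2)"
  have "q > 0" using False by (simp add: q_def sum_nonneg order_neq_le_trans)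
  define c where "c = 1 / sqrt q"
  have c2: "c ^ 2 = 1 / q" using \<open>q > 0\<close> by (simp add: c_def power_divide)
  have "(\<lambda>i. c * f i) \<in> zero_sum_sphere n"
    using supp zero_sum \<open>q > 0\<close>
    by (simp add: zero_sum_sphere_def power_mult_distrib c2 q_def[symmetric]
        flip: sum_distrib_left sum_divide_distrib)
  then have "fan_form n fm \<le> fan_form n f / q"
    using min by (fastforce simp: fan_form_scale c2)
  then show ?thesis using \<open>q > 0\<close> by (simp add: q_def[symmetric] pos_le_divide_eq)
qed

lemma fan_form_stationary:
  assumes fm: "fm \<in> zero_sum_sphere n"
    and min: "\<And>f. f \<in> zero_sum_sphere n \<Longrightarrow> fan_form n fm \<le> fan_form n f"
    and supp: "\<And>k. k > n \<Longrightarrow> h k = 0" and zero_sum: "(\<Sum>i\<in>{0..n}. h i) = 0"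
  shows "fan_form_polar n fm h = 2 * fan_form n fm * (\<Sum>i\<in>{0..n}. fm i * h i)"
proof -
  define \<mu> where "\<mu> = fan_form n fm"
  define I where "I = (\<Sum>i\<in>{0..n}. fm i * h i)"
  define H where "H = (\<Sum>i\<in>{0..n}. h i ^ 2)"
  have "0 \<le> t * (fan_form_polar n fm h - 2 * \<mu> * I) + t ^ 2 * (fan_form n h - \<mu> * H)" for t
  proof -
    have "(\<Sum>i\<in>{0..n}. fm i + t * h i) = 0"
      using fm zero_sum by (simp add: zero_sum_sphere_def sum.distrib flip: sum_distrib_left)
    moreover have "fm k + t * h k = 0" if "k > n" for k
      using fm supp that by (simp add: zero_sum_sphere_def)
    ultimately have "\<mu> * (\<Sum>i\<in>{0..n}. (fm i + t * h i) ^ 2) \<le> fan_form n (\<lambda>i. fm i + t * h i)"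
      unfolding \<mu>_def by (intro fan_form_minimum_homogeneous[OF min])
    moreover have "(\<Sum>i\<in>{0..n}. (fm i + t * h i) ^ 2) = 1 + 2 * t * I + t ^ 2 * H"
      using fm by (simp add: sum_power2_add_scaled zero_sum_sphere_def I_def H_def)
    ultimately have "\<mu> * (1 + 2 * t * I + t ^ 2 * H) \<le> \<mu> + t * fan_form_polar n fm h + t ^ 2 * fan_form n h"
      by (simp add: fan_form_add_scaled \<mu>_def)
    then show ?thesis by (simp add: algebra_simps)
  qed
  then show ?thesis
    unfolding \<mu>_def I_def by (metis linear_coefficient_zero_if_nonneg eq_iff_diff_eq_0)
qed

definition path_part :: "nat \<Rightarrow> (nat \<Rightarrow> real) \<Rightarrow> nat \<Rightarrow> real" where
  "path_part n f j = (if 1 \<le> j \<and> j \<le> n then f j else 0)"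

lemma fan_form_polar_hub_to_vertex:
  assumes "k \<in> {1..n}"
  shows "fan_form_polar n f (\<lambda>i. if i = k then 1 else if i = 0 then -1 else 0)
    = path_part n f (k - 1) + path_part n f (k + 1) + 2 * f 0"
proof -
  have "(\<Sum>i\<in>{1..<n}. f i * (if Suc i = k then 1 else if Suc i = 0 then -1 else 0))
      = (\<Sum>i\<in>{1..<n}. if i = k - 1 then f i else 0)"
    using assms by (intro sum.cong) auto
  also have "\<dots> = path_part n f (k - 1)" using assms by (auto simp: path_part_def)
  finally have prev: "(\<Sum>i\<in>{1..<n}. f i * (if Suc i = k then 1 else if Suc i = 0 then -1 else 0))
      = path_part n f (k - 1)" .
  have "(\<Sum>i\<in>{1..<n}. (if i = k then 1 else if i = 0 then -1 else 0) * f (Suc i))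
      = (\<Sum>i\<in>{1..<n}. if i = k then f (Suc i) else 0)"
    using assms by (intro sum.cong) auto
  also have "\<dots> = path_part n f (k + 1)" using assms by (auto simp: path_part_def)
  finally have succ: "(\<Sum>i\<in>{1..<n}. (if i = k then 1 else if i = 0 then -1 else 0) * f (Suc i))
      = path_part n f (k + 1)" .
  show ?thesis
    using assms unfolding fan_form_polar_def sum.distrib prev succ by simp
qed

lemma fan_form_minimizer_path_eigen:
  assumes fm: "fm \<in> zero_sum_sphere n"
    and min: "\<And>f. f \<in> zero_sum_sphere n \<Longrightarrow> fan_form n fm \<le> fan_form n f"
  shows "path_eigen n (fan_form n fm) (path_part n fm)"
proof -
  define \<mu> where "\<mu> = fan_form n fm"
  define g where "g = path_part n fm"
  have path_sum: "(\<Sum>i\<in>{1..n}. g i) = - fm 0"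
    using fm by (simp add: zero_sum_sphere_def g_def path_part_def sum_atLeast0_atMost_split)
  have "g (k - 1) + g (k + 1) - 2 * \<mu> * g k = 2 * (1 + \<mu>) * (\<Sum>i\<in>{1..n}. g i)"
    if k: "k \<in> {1..n}" for k
  proof -
    define h :: "nat \<Rightarrow> real" where "h = (\<lambda>i. if i = k then 1 else if i = 0 then -1 else 0)"
    have "(\<Sum>i\<in>{1..n}. fm i * h i) = (\<Sum>i\<in>{1..n}. if i = k then fm i else 0)"
      "(\<Sum>i\<in>{1..n}. h i) = (\<Sum>i\<in>{1..n}. if i = k then 1 else 0)"
      by (intro sum.cong; simp add: h_def)+
    then have "(\<Sum>i\<in>{0..n}. fm i * h i) = fm k - fm 0" "(\<Sum>i\<in>{0..n}. h i) = 0"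
      using k by (simp_all add: sum_atLeast0_atMost_split h_def)
    then have "fan_form_polar n fm h = 2 * \<mu> * (fm k - fm 0)"
      using fan_form_stationary[OF fm min, of h] k by (simp add: h_def \<mu>_def)
    moreover have "fan_form_polar n fm h = g (k - 1) + g (k + 1) + 2 * fm 0"
      unfolding h_def g_def by (rule fan_form_polar_hub_to_vertex[OF k])
    moreover have "g k = fm k" using k by (simp add: g_def path_part_def)
    ultimately show ?thesis
      using path_sum by (simp add: algebra_simps)
  qed
  moreover have "g 0 = 0" "g (n + 1) = 0" by (simp_all add: g_def path_part_def)
  ultimately show ?thesis unfolding path_eigen_def g_def \<mu>_def by blast
qed

lemma fan_form_minimizer_exists:
  assumes "1 \<le> n"
  obtains fm where "fm \<in> zero_sum_sphere n"
    "\<And>f. f \<in> zero_sum_sphere n \<Longrightarrow> fan_form n fm \<le> fan_form n f" "fan_form n fm \<le> - 1 / 2"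
proof -
  define v :: "nat \<Rightarrow> real" where "v k = (if k = 0 then - 1 / sqrt 2 else if k = 1 then 1 / sqrt 2 else 0)" for k
  have "(\<Sum>i\<in>{1..n}. F (v i)) = F (v 1)" if "F 0 = 0" for F :: "real \<Rightarrow> real"
  proof -
    have "(\<Sum>i\<in>{1..n}. F (v i)) = (\<Sum>i\<in>{1..n}. if i = 1 then F (v 1) else 0)"
      using that by (intro sum.cong) (auto simp: v_def)
    then show ?thesis using assms by (simp add: sum.delta')
  qed
  from this[of "\<lambda>y. y ^ 2"] this[of "\<lambda>y. y"]
  have "(\<Sum>i\<in>{1..n}. v i ^ 2) = v 1 ^ 2" "(\<Sum>i\<in>{1..n}. v i) = v 1" by simp_all
  then have v: "v \<in> zero_sum_sphere n"
    using assms by (simp add: zero_sum_sphere_def sum_atLeast0_atMost_split v_def power_divide)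
  have "fan_form n v = - 1 / 2"
    by (simp add: fan_form_def v_def power_divide)
  obtain fm where fm: "fm \<in> zero_sum_sphere n"
    and min: "\<And>f. f \<in> zero_sum_sphere n \<Longrightarrow> fan_form n fm \<le> fan_form n f"
    using continuous_attains_inf[OF compact_zero_sum_sphere _ continuous_on_fan_form] v by blast
  moreover have "fan_form n fm \<le> - 1 / 2"
    using min[OF v] \<open>fan_form n v = - 1 / 2\<close> by simp
  ultimately show ?thesis by (rule that)
qed

lemma fan_form_bounded_below_by_root:
  assumes "1 \<le> n"
  obtains \<mu> where "phi n \<mu> = 0" "\<mu> \<le> - 1 / 2"
    "\<And>f. (\<Sum>i\<in>{0..n}. f i ^ 2) = 1 \<Longrightarrow> (\<Sum>i\<in>{0..n}. f i) = 0 \<Longrightarrow> \<mu> \<le> fan_form n f"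
proof -
  obtain fm where fm: "fm \<in> zero_sum_sphere n"
    and min: "\<And>f. f \<in> zero_sum_sphere n \<Longrightarrow> fan_form n fm \<le> fan_form n f"
    and le: "fan_form n fm \<le> - 1 / 2"
    using fan_form_minimizer_exists[OF assms] by blast
  have "\<exists>k\<in>{1..n}. path_part n fm k \<noteq> 0"
  proof (rule ccontr)
    assume "\<not> ?thesis"
    then have "fm k = 0" if "k \<in> {1..n}" for k using that by (auto simp: path_part_def)
    then have "(\<Sum>i\<in>{1..n}. fm i) = 0" "(\<Sum>i\<in>{1..n}. fm i ^ 2) = 0" by simp_all
    then show False using fm by (auto simp: zero_sum_sphere_def sum_atLeast0_atMost_split)
  qed
  then have root: "phi n (fan_form n fm) = 0"
    using path_eigen_iff_phi[OF assms, of "fan_form n fm"] le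
      fan_form_minimizer_path_eigen[OF fm min] by auto
  have "fan_form n fm \<le> fan_form n f"
    if "(\<Sum>i\<in>{0..n}. f i ^ 2) = 1" "(\<Sum>i\<in>{0..n}. f i) = 0" for f
  proof -
    define f' where "f' i = (if i \<le> n then f i else 0)" for i
    have "f' \<in> zero_sum_sphere n" using that by (simp add: zero_sum_sphere_def f'_def)
    then have "fan_form n fm \<le> fan_form n f'" by (rule min)
    also have "fan_form n f' = fan_form n f" by (simp add: fan_form_def f'_def)
    finally show ?thesis .
  qed
  with root le show ?thesis by (rule that)
qed

lemma fan_form_attains_root:
  assumes "1 \<le> n" "x \<noteq> 1" "phi n x = 0"
  obtains f where "(\<Sum>i\<in>{0..n}. f i ^ 2) = 1" "(\<Sum>i\<in>{0..n}. f i) = 0" "fan_form n f = x"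
proof -
  obtain g k where g: "path_eigen n x g" and k: "k \<in> {1..n}" "g k \<noteq> 0"
    using path_eigen_iff_phi[OF assms(1,2)] assms(3) by blast
  define S where "S = (\<Sum>i\<in>{1..n}. g i)"
  define f where "f i = (if i = 0 then - S else g i)" for i
  define q where "q = (\<Sum>i\<in>{0..n}. f i ^ 2)"
  have q: "q = S ^ 2 + (\<Sum>i\<in>{1..n}. g i ^ 2)"
    by (simp add: q_def f_def sum_atLeast0_atMost_split)
  have "0 < g k ^ 2" "g k ^ 2 \<le> (\<Sum>i\<in>{1..n}. g i ^ 2)"
    using k by (auto intro: member_le_sum)
  then have "q > 0" unfolding q using zero_le_power2[of S] by linarith
  have "fan_form n f = (\<Sum>k\<in>{1..<n}. g k * g (Suc k)) - S ^ 2"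
    by (simp add: fan_form_def f_def)
  also have "\<dots> = x * q"
    using path_eigen_rayleigh[OF g] by (simp add: q S_def)
  finally have "fan_form n f = x * q" .
  define c where "c = 1 / sqrt q"
  have c2: "c ^ 2 = 1 / q" using \<open>q > 0\<close> by (simp add: c_def power_divide)
  show ?thesis
  proof (rule that[of "\<lambda>i. c * f i"])
    show "(\<Sum>i\<in>{0..n}. (c * f i) ^ 2) = 1"
      using \<open>q > 0\<close> by (simp add: power_mult_distrib c2 q_def flip: sum_distrib_left sum_divide_distrib)
    show "(\<Sum>i\<in>{0..n}. c * f i) = 0"
      by (simp add: f_def S_def sum_atLeast0_atMost_split flip: sum_distrib_left)
    show "fan_form n (\<lambda>i. c * f i) = x"
      using \<open>q > 0\<close> \<open>fan_form n f = x * q\<close> by (simp add: fan_form_scale c2)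
  qed
qed

lemma fan_form_minimum:
  assumes "1 \<le> n"
  defines "\<alpha> \<equiv> Min {x. phi n x = 0}"
  shows "\<exists>f. (\<Sum>i\<in>{0..n}. f i ^ 2) = 1 \<and> (\<Sum>i\<in>{0..n}. f i) = 0 \<and> fan_form n f = \<alpha>"
    and "\<And>f. (\<Sum>i\<in>{0..n}. f i ^ 2) = 1 \<Longrightarrow> (\<Sum>i\<in>{0..n}. f i) = 0 \<Longrightarrow> \<alpha> \<le> fan_form n f"
proof -
  obtain \<mu> where \<mu>: "phi n \<mu> = 0" "\<mu> \<le> - 1 / 2"
    and lower: "\<And>f. (\<Sum>i\<in>{0..n}. f i ^ 2) = 1 \<Longrightarrow> (\<Sum>i\<in>{0..n}. f i) = 0 \<Longrightarrow> \<mu> \<le> fan_form n f"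
    using fan_form_bounded_below_by_root[OF assms(1)] by blast
  have "\<alpha> \<le> \<mu>" "phi n \<alpha> = 0"
    using Min_le[OF finite_phi_roots, of \<mu> n] Min_in[OF finite_phi_roots, of n] \<mu>(1)
    unfolding \<alpha>_def by auto
  moreover from this \<mu>(2) have "\<alpha> \<noteq> 1" by auto
  ultimately obtain f where "(\<Sum>i\<in>{0..n}. f i ^ 2) = 1" "(\<Sum>i\<in>{0..n}. f i) = 0" "fan_form n f = \<alpha>"
    using fan_form_attains_root[OF assms(1)] by metis
  then show "\<exists>f. (\<Sum>i\<in>{0..n}. f i ^ 2) = 1 \<and> (\<Sum>i\<in>{0..n}. f i) = 0 \<and> fan_form n f = \<alpha>"
    by blast
  show "\<alpha> \<le> fan_form n f" if "(\<Sum>i\<in>{0..n}. f i ^ 2) = 1" "(\<Sum>i\<in>{0..n}. f i) = 0" for f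
    using lower[OF that] \<open>\<alpha> \<le> \<mu>\<close> by simp
qed

section \<open>Distances in the fan graph\<close>

lemma graph_dist_refl: "graph_dist E i i = 0"
  by (simp add: graph_dist_def)

lemma graph_dist_edge:
  assumes "E i j" "i \<noteq> j"
  shows "graph_dist E i j = 1"
  unfolding graph_dist_def
proof (rule Least_equality)
  show "(E ^^ 1) i j" using assms by (simp add: relcompp_apply)
  show "1 \<le> k" if "(E ^^ k) i j" for k
    using that assms by (cases k) auto
qed

lemma graph_dist_two:
  assumes "(E ^^ 2) i j" "i \<noteq> j" "\<not> E i j"
  shows "graph_dist E i j = 2"
  unfolding graph_dist_def
proof (rule Least_equality)
  show "2 \<le> k" if "(E ^^ k) i j" for k
  proof (rule ccontr)
    assume "\<not> 2 \<le> k"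
    then have "k = 0 \<or> k = 1" by auto
    then show False using that assms by auto
  qed
qed (use assms in simp)

lemma fan_graph_dist:
  assumes "i \<le> n" "j \<le> n"
  shows "graph_dist (fan_edge n) i j = (if i = j then 0 else if fan_edge n i j then 1 else 2)"
proof -
  have "(fan_edge n ^^ 2) i j" if "i \<noteq> j" "\<not> fan_edge n i j"
  proof -
    have "fan_edge n i 0" "fan_edge n 0 j" using assms that by (auto simp: fan_edge_def)
    then show ?thesis by (auto simp: numeral_2_eq_2 relcompp_apply)
  qed
  then show ?thesis by (simp add: graph_dist_refl graph_dist_edge graph_dist_two)
qed

lemma fan_adjacency_form:
  fixes f :: "nat \<Rightarrow> real"
  assumes zero_sum: "(\<Sum>i\<in>{0..n}. f i) = 0"
  shows "(\<Sum>i\<in>{0..n}. \<Sum>j\<in>{0..n}. if fan_edge n i j then f i * f j else 0) = 2 * fan_form n f"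
proof -
  define g where "g = path_part n f"
  have path_sum: "(\<Sum>j\<in>{1..n}. f j) = - f 0"
    using zero_sum by (simp add: sum_atLeast0_atMost_split)
  have hub: "(\<Sum>j\<in>{0..n}. if fan_edge n 0 j then f 0 * f j else 0) = - (f 0 ^ 2)"
    using path_sum by (simp add: sum_atLeast0_atMost_split fan_edge_def power2_eq_square flip: sum_distrib_left)
  have "(\<Sum>j\<in>{0..n}. if fan_edge n i j then f i * f j else 0) = f i * f 0 + g i * (g (i - 1) + g (i + 1))"
    if i: "i \<in> {1..n}" for i
  proof -
    have "(\<Sum>j\<in>{1..n}. if fan_edge n i j then f i * f j else 0)
        = (\<Sum>j\<in>{1..n}. (if j = i + 1 then f i * f j else 0) + (if j = i - 1 then f i * f j else 0))"
      using i by (intro sum.cong) (auto simp: fan_edge_def)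
    also have "\<dots> = g i * (g (i - 1) + g (i + 1))"
      using i by (simp add: sum.distrib sum.delta' g_def path_part_def algebra_simps)
    finally show ?thesis using i by (simp add: sum_atLeast0_atMost_split fan_edge_def)
  qed
  then have "(\<Sum>i\<in>{1..n}. \<Sum>j\<in>{0..n}. if fan_edge n i j then f i * f j else 0)
      = (\<Sum>i\<in>{1..n}. f i) * f 0 + (\<Sum>i\<in>{1..n}. g i * (g (i - 1) + g (i + 1)))"
    by (simp add: sum.distrib sum_distrib_right)
  also have "\<dots> = - (f 0 ^ 2) + 2 * (\<Sum>k\<in>{1..<n}. g k * g (Suc k))"
    using sum_neighbour_products[of g n] path_sum by (simp add: g_def path_part_def power2_eq_square)
  also have "(\<Sum>k\<in>{1..<n}. g k * g (Suc k)) = (\<Sum>k\<in>{1..<n}. f k * f (Suc k))"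
    by (intro sum.cong) (auto simp: g_def path_part_def)
  finally show ?thesis
    using hub by (simp add: sum_atLeast0_atMost_split fan_form_def)
qed

lemma fan_distance_form:
  fixes f :: "nat \<Rightarrow> real"
  assumes zero_sum: "(\<Sum>i\<in>{0..n}. f i) = 0"
  shows "(\<Sum>i\<in>{0..n}. \<Sum>j\<in>{0..n}. f i * real (graph_dist (fan_edge n) i j) * f j)
     = - 2 * (\<Sum>i\<in>{0..n}. f i ^ 2) - 2 * fan_form n f"
proof -
  have "(\<Sum>i\<in>{0..n}. \<Sum>j\<in>{0..n}. f i * real (graph_dist (fan_edge n) i j) * f j)
      = (\<Sum>i\<in>{0..n}. \<Sum>j\<in>{0..n}. 2 * (f i * f j) - (if i = j then 2 * f i ^ 2 else 0)
            - (if fan_edge n i j then f i * f j else 0))"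
    by (intro sum.cong refl) (auto simp: fan_graph_dist fan_edge_def power2_eq_square)
  also have "\<dots> = - 2 * (\<Sum>i\<in>{0..n}. f i ^ 2)
      - (\<Sum>i\<in>{0..n}. \<Sum>j\<in>{0..n}. if fan_edge n i j then f i * f j else 0)"
  proof -
    have "(\<Sum>j\<in>{0..n}. 2 * (f i * f j)) = 2 * f i * (\<Sum>j\<in>{0..n}. f j)" for i
      by (simp add: sum_distrib_left mult.assoc)
    moreover have "(\<Sum>j\<in>{0..n}. if i = j then 2 * f i ^ 2 else 0) = 2 * f i ^ 2" if "i \<in> {0..n}" for i
      using that by simp
    ultimately show ?thesis
      using zero_sum by (simp add: sum_subtractf sum_distrib_left)
  qed
  finally show ?thesis
    using fan_adjacency_form[OF zero_sum] by simp
qed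

theorem mainTheorem9:
  fixes n :: nat
  assumes "n \<ge> 1"
  shows "QEC (fan_vertices n) (fan_edge n) = - 2 * Min {x :: real. phi n x = 0} - 2"
proof -
  define \<alpha> where "\<alpha> = Min {x :: real. phi n x = 0}"
  let ?X = "{(\<Sum>i\<in>{0..n}. \<Sum>j\<in>{0..n}. f i * real (graph_dist (fan_edge n) i j) * f j) | f :: nat \<Rightarrow> real.
              (\<Sum>i\<in>{0..n}. f i ^ 2) = 1 \<and> (\<Sum>i\<in>{0..n}. f i) = 0}"
  have "Sup ?X = - 2 * \<alpha> - 2"
  proof (rule cSup_eq_maximum)
    obtain f where f: "(\<Sum>i\<in>{0..n}. f i ^ 2) = 1" "(\<Sum>i\<in>{0..n}. f i) = 0" "fan_form n f = \<alpha>"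
      using fan_form_minimum(1)[OF assms] unfolding \<alpha>_def by blast
    with fan_distance_form[OF f(2)] show "- 2 * \<alpha> - 2 \<in> ?X" by force
  next
    fix y assume "y \<in> ?X"
    then obtain f where f: "(\<Sum>i\<in>{0..n}. f i ^ 2) = 1" "(\<Sum>i\<in>{0..n}. f i) = 0"
      and y: "y = (\<Sum>i\<in>{0..n}. \<Sum>j\<in>{0..n}. f i * real (graph_dist (fan_edge n) i j) * f j)"
      by blast
    show "y \<le> - 2 * \<alpha> - 2"
      using fan_distance_form[OF f(2)] fan_form_minimum(2)[OF assms f] f(1) by (simp add: y \<alpha>_def)
  qed
  then show ?thesis by (simp add: QEC_def fan_vertices_def \<alpha>_def)
qed

end
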